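(* Define sets of positive integers $R_1,R_2,\dots$ by $R_1=\{2\}$ and, for $k\geq 1$, $R_{k+1}=\{(x+5)^2 : x\in R_k\}\cup\{x\in\mathbb{Z}_{>0} : x^2\in R_k\}$. Then every integer $x$ with $x\geq 2$ and $x\not\equiv 0\pmod 5$ lies in $R_i$ for at least one $i\geq 1$. *)

theory Defs
  imports Main
begin

text \<open>R n for n \<ge> 1 is the set R_n of the paper; R 0 is an unused empty placeholder.\<close>
fun R :: "nat \<Rightarrow> int set" where
  "R 0 = {}"
| "R (Suc 0) = {2}"
| "R (Suc (Suc k)) =
     {(x + 5)^2 | x. x \<in> R (Suc k)} \<union> {x. x > 0 \<and> x^2 \<in> R (Suc k)}"

end

theory Submission
  imports Defs
begin

text \<open>Squaring \<open>x + 5\<close> and then taking the positive square root shows that the set of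
  elements of the \<open>R\<^sub>i\<close> is closed under \<open>x \<mapsto> x + 5\<close>. Moving up to a square in the
  right residue class and descending to its root therefore reaches smaller elements:
  \<open>2 \<mapsto> 49 \<mapsto> 2916\<close>, then \<open>56\<^sup>2\<close>, \<open>11\<^sup>2\<close>, \<open>6\<^sup>2\<close>, \<open>4\<^sup>2\<close>, \<open>3\<^sup>2\<close> give \<open>56, 11, 6, 4, 3\<close>.
  Now \<open>6, 2, 3, 4\<close> represent the nonzero residues mod 5, and every admissible \<open>x\<close> lies
  above the one in its class.\<close>

definition reachable :: "int \<Rightarrow> bool" where
  "reachable x \<longleftrightarrow> (\<exists>i\<ge>1. x \<in> R i)"

lemma reachable_iff_R_Suc: "reachable x \<longleftrightarrow> (\<exists>k. x \<in> R (Suc k))"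
  unfolding reachable_def
proof
  assume "\<exists>i\<ge>1. x \<in> R i"
  then obtain i where "1 \<le> i" "x \<in> R i"
    by blast
  then show "\<exists>k. x \<in> R (Suc k)"
    by (cases i) auto
next
  assume "\<exists>k. x \<in> R (Suc k)"
  then obtain k where "x \<in> R (Suc k)" ..
  then show "\<exists>i\<ge>1. x \<in> R i"
    by (intro exI[of _ "Suc k"]) simp
qed

lemma R_pos: "x \<in> R i \<Longrightarrow> x > 0"
proof (induction i arbitrary: x rule: R.induct)
  case (3 k)
  then show ?case
    by (auto simp del: power2_eq_square) (smt (verit) zero_less_power2)
qed auto

lemma reachable_pos: "reachable x \<Longrightarrow> x > 0"
  unfolding reachable_def using R_pos by blast

lemma reachable_2: "reachable 2"
  unfolding reachable_def by (rule exI[of _ 1]) simp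

lemma reachable_shift_square:
  assumes "reachable x"
  shows "reachable ((x + 5)^2)"
proof -
  obtain k where "x \<in> R (Suc k)"
    using assms unfolding reachable_iff_R_Suc ..
  then have "(x + 5)^2 \<in> R (Suc (Suc k))"
    by auto
  then show ?thesis
    unfolding reachable_iff_R_Suc ..
qed

lemma reachable_sqrt:
  assumes "x > 0" and "reachable (x^2)"
  shows "reachable x"
proof -
  obtain k where "x^2 \<in> R (Suc k)"
    using assms(2) unfolding reachable_iff_R_Suc ..
  then have "x \<in> R (Suc (Suc k))"
    using assms(1) by simp
  then show ?thesis
    unfolding reachable_iff_R_Suc ..
qed

lemma reachable_add_5:
  assumes "reachable x"
  shows "reachable (x + 5)"
proof (rule reachable_sqrt)
  show "x + 5 > 0"
    using reachable_pos[OF assms] by simp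
  show "reachable ((x + 5)^2)"
    using reachable_shift_square[OF assms] .
qed

lemma reachable_add_mult_5: "reachable x \<Longrightarrow> reachable (x + 5 * int n)"
proof (induction n)
  case (Suc n)
  then have "reachable (x + 5 * int n + 5)"
    using reachable_add_5 by blast
  then show ?case
    by (simp add: algebra_simps)
qed simp

lemma reachable_above_cong:
  assumes "reachable a" and "a \<le> y" and "y mod 5 = a mod 5"
  shows "reachable y"
proof -
  obtain m where m: "y - a = 5 * m"
    using assms(3) by (metis dvdE mod_eq_dvd_iff)
  then have "y = a + 5 * int (nat m)"
    using assms(2) by simp
  then show ?thesis
    using reachable_add_mult_5[OF assms(1)] by metis
qed

lemma reachable_root_of_square_above:
  assumes "reachable a" and "r > 0" and "a \<le> r^2" and "r^2 mod 5 = a mod 5"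
  shows "reachable r"
  using assms reachable_above_cong reachable_sqrt by blast

lemma reachable_6_4_3: "reachable 6" "reachable 4" "reachable 3"
proof -
  have "reachable 2916"
    using reachable_shift_square[OF reachable_shift_square[OF reachable_2]] by simp
  then have "reachable 56"
    by (rule reachable_root_of_square_above) simp_all
  then have "reachable 11"
    by (rule reachable_root_of_square_above) simp_all
  then show "reachable 6"
    by (rule reachable_root_of_square_above) simp_all
  then show "reachable 4"
    by (rule reachable_root_of_square_above) simp_all
  then show "reachable 3"
    by (rule reachable_root_of_square_above) simp_all
qed

theorem corollary6:
  fixes x :: int
  assumes "x \<ge> 2" and "\<not> (5 dvd x)"
  shows "\<exists>i\<ge>1. x \<in> R i"
proof -
  have "x mod 5 = 1 \<and> 6 \<le> x \<or> x mod 5 = 2 \<or> x mod 5 = 3 \<and> 3 \<le> x \<or> x mod 5 = 4 \<and> 4 \<le> x"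
    using assms by presburger
  then consider "x mod 5 = 1" "6 \<le> x" | "x mod 5 = 2" | "x mod 5 = 3" "3 \<le> x" | "x mod 5 = 4" "4 \<le> x"
    by blast
  then have "reachable x"
    by cases (use reachable_above_cong reachable_2 reachable_6_4_3 assms(1) in auto)
  then show ?thesis
    unfolding reachable_def .
qed

end
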